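(* Let $a_1,a_2,\ldots,a_W$ with $a_t\in\{1,2,\ldots,n\}$ be an access sequence of length $W$. For $t\ge 0$ and $i\in\{1,\dots,n\}$ let $w_i^{(t)}$ be the number of indices $s\le t$ with $a_s=i$, let $w_i=w_i^{(W)}$, and let $H=\sum_{i:\,w_i>0}\frac{w_i}{W}\log\frac{W}{w_i}$ be the entropy of the full access sequence. Then $$\sum_{t=1}^W \log \frac{t}{\max\left(w^{(t-1)}_{a_t},\,1\right)} \le W\cdot H + 2W.$$
   Context: $\log$ denotes the binary logarithm. *)

theory Defs
  imports Complex_Main
begin

text \<open>Access sequence a_1..a_W given as a function on nat (values outside 1..W irrelevant).
  cnt a i t = number of indices s with 1 <= s <= t and a s = i.\<close>
definition cnt :: "(nat \<Rightarrow> nat) \<Rightarrow> nat \<Rightarrow> nat \<Rightarrow> nat" where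
  "cnt a i t = card {s \<in> {1..t}. a s = i}"

definition entropy :: "(nat \<Rightarrow> nat) \<Rightarrow> nat \<Rightarrow> nat \<Rightarrow> real" where
  "entropy a n W = (\<Sum>i\<in>{i\<in>{1..n}. cnt a i W > 0}.
      (real (cnt a i W) / real W) * log 2 (real W / real (cnt a i W)))"

end

theory Submission
  imports Defs "HOL-Analysis.Harmonic_Numbers"
begin

text \<open>Grouping the accesses by symbol, the denominators contributed by symbol \<open>i\<close> are
  \<open>1, 1, 2, \<dots>, w\<^sub>i - 1\<close>, so the subtracted part of the sum is \<open>\<Sum>\<^sub>i log ((w\<^sub>i - 1)!)\<close>.
  Since \<open>w log w \<le> log ((w - 1)!) + 2w\<close> (each step \<open>w \<mapsto> w + 1\<close> raises the left side by at
  most \<open>log w + 2\<close>) and \<open>log t \<le> log W\<close>, the sum is at most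
  \<open>W log W - \<Sum>\<^sub>i w\<^sub>i log w\<^sub>i + 2W = W H + 2W\<close>.\<close>

lemma cnt_0 [simp]: "cnt a i 0 = 0"
  by (simp add: cnt_def)

lemma cnt_Suc: "cnt a i (Suc t) = cnt a i t + (if a (Suc t) = i then 1 else 0)"
proof -
  have "{s \<in> {1..Suc t}. a s = i} =
      {s \<in> {1..t}. a s = i} \<union> (if a (Suc t) = i then {Suc t} else {})"
    by (auto simp: le_Suc_eq)
  then show ?thesis
    by (auto simp: cnt_def card_insert_if)
qed

lemma sum_accesses_by_symbol:
  fixes f :: "nat \<Rightarrow> nat \<Rightarrow> 'b::comm_monoid_add"
  assumes "finite I" and "\<forall>t\<in>{1..W}. a t \<in> I"
  shows "(\<Sum>t=1..W. f (a t) (cnt a (a t) (t - 1))) = (\<Sum>i\<in>I. \<Sum>k<cnt a i W. f i k)"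
  using assms(2)
proof (induction W)
  case 0
  then show ?case by simp
next
  case (Suc W)
  then have IH: "(\<Sum>t=1..W. f (a t) (cnt a (a t) (t - 1))) = (\<Sum>i\<in>I. \<Sum>k<cnt a i W. f i k)"
    and last: "a (Suc W) \<in> I"
    by auto
  have "(\<Sum>i\<in>I. \<Sum>k<cnt a i (Suc W). f i k) =
      (\<Sum>i\<in>I. (\<Sum>k<cnt a i W. f i k) + (if i = a (Suc W) then f i (cnt a i W) else 0))"
    by (intro sum.cong) (auto simp: cnt_Suc)
  also have "\<dots> = (\<Sum>i\<in>I. \<Sum>k<cnt a i W. f i k) + f (a (Suc W)) (cnt a (a (Suc W)) W)"
    using assms(1) last by (simp add: sum.distrib)
  finally show ?case
    using IH by simp
qed

lemma sum_cnt_eq_length: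
  assumes "finite I" and "\<forall>t\<in>{1..W}. a t \<in> I"
  shows "(\<Sum>i\<in>I. real (cnt a i W)) = real W"
  using sum_accesses_by_symbol[OF assms, of "\<lambda>_ _. 1 :: real"] by simp

lemma Suc_mult_log_increment_le_2:
  assumes "w \<ge> (1::nat)"
  shows "real (w + 1) * (log 2 (real (w + 1)) - log 2 (real w)) \<le> 2"
proof -
  consider "w = 1" | "w = 2" | "w \<ge> 3"
    using assms by linarith
  then show ?thesis
  proof cases
    case 1
    then show ?thesis by simp
  next
    case 2
    have "3 * log 2 (3::real) = log 2 (3 ^ 3)"
      by (subst log_nat_power) simp_all
    also have "\<dots> \<le> log 2 (2 ^ 5)"
      by simp
    also have "\<dots> = 5"
      by (subst log_nat_power) simp_all
    finally show ?thesis
      using 2 by simp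
  next
    case 3
    have w_pos: "real w > 0"
      using assms by simp
    have "1 + 1 / real w = (real w + 1) / real w"
      using w_pos by (simp add: field_simps)
    then have "log 2 (real (w + 1)) - log 2 (real w) = ln (1 + 1 / real w) / ln 2"
      using w_pos by (simp add: log_def ln_div diff_divide_distrib)
    also have "\<dots> \<le> (1 / real w) / ln 2"
      by (rule divide_right_mono) (auto intro: ln_add_one_self_le_self)
    also have "\<dots> \<le> (1 / real w) / (2 / 3)"
      using ln2_ge_two_thirds w_pos by (intro divide_left_mono) auto
    finally have "log 2 (real (w + 1)) - log 2 (real w) \<le> 3 / (2 * real w)"
      by simp
    then have "real (w + 1) * (log 2 (real (w + 1)) - log 2 (real w))
        \<le> real (w + 1) * (3 / (2 * real w))"
      by (rule mult_left_mono) simp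
    also have "\<dots> \<le> 2"
      using 3 w_pos by (simp add: field_simps)
    finally show ?thesis .
  qed
qed

lemma mult_log_le_sum_log_below:
  "real w * log 2 (real w) \<le> (\<Sum>k<w. log 2 (real (max k 1))) + 2 * real w"
proof (induction w)
  case 0
  then show ?case by simp
next
  case (Suc w)
  show ?case
  proof (cases "w = 0")
    case True
    then show ?thesis by simp
  next
    case False
    then have "real (w + 1) * (log 2 (real (w + 1)) - log 2 (real w)) \<le> 2"
      by (intro Suc_mult_log_increment_le_2) simp
    moreover have "max w 1 = w"
      using False by simp
    ultimately show ?thesis
      using Suc.IH by (simp add: algebra_simps)
  qed
qed

lemma length_mult_entropy:
  assumes "W > 0"
  shows "real W * entropy a n W =
    (\<Sum>i\<in>{1..n}. real (cnt a i W) * (log 2 (real W) - log 2 (real (cnt a i W))))"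
proof -
  have "real W * entropy a n W =
      (\<Sum>i\<in>{i\<in>{1..n}. cnt a i W > 0}. real (cnt a i W) * log 2 (real W / real (cnt a i W)))"
    using assms by (simp add: entropy_def sum_distrib_left)
  also have "\<dots> = (\<Sum>i\<in>{1..n}. real (cnt a i W) * log 2 (real W / real (cnt a i W)))"
    by (intro sum.mono_neutral_left) auto
  also have "\<dots> = (\<Sum>i\<in>{1..n}. real (cnt a i W) * (log 2 (real W) - log 2 (real (cnt a i W))))"
    using assms by (intro sum.cong) (auto simp: log_divide)
  finally show ?thesis .
qed

theorem lemma1:
  fixes a :: "nat \<Rightarrow> nat" and n W :: nat
  assumes "\<forall>t\<in>{1..W}. a t \<in> {1..n}"
  shows "(\<Sum>t=1..W. log 2 (real t / real (max (cnt a (a t) (t - 1)) 1)))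
           \<le> real W * entropy a n W + 2 * real W"
proof (cases "W = 0")
  case True
  then show ?thesis by simp
next
  case False
  let ?w = "\<lambda>i. cnt a i W"
  have "(\<Sum>t=1..W. log 2 (real t / real (max (cnt a (a t) (t - 1)) 1)))
      = (\<Sum>t=1..W. log 2 (real t)) - (\<Sum>t=1..W. log 2 (real (max (cnt a (a t) (t - 1)) 1)))"
    by (simp add: log_divide sum_subtractf)
  also have "\<dots> \<le> real W * log 2 (real W) - (\<Sum>i\<in>{1..n}. \<Sum>k<?w i. log 2 (real (max k 1)))"
    using sum_accesses_by_symbol[OF _ assms, of "\<lambda>_ k. log 2 (real (max k 1))"]
      sum_mono[of "{1..W}" "\<lambda>t. log 2 (real t)" "\<lambda>_. log 2 (real W)"]
    by simp
  also have "\<dots> \<le> real W * log 2 (real W) - (\<Sum>i\<in>{1..n}. real (?w i) * log 2 (real (?w i)) - 2 * real (?w i))"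
    using mult_log_le_sum_log_below by (intro diff_left_mono sum_mono) (smt (verit))
  also have "\<dots> = (\<Sum>i\<in>{1..n}. real (?w i) * (log 2 (real W) - log 2 (real (?w i)))) + 2 * real W"
    using sum_cnt_eq_length[OF _ assms]
    by (simp add: sum_subtractf right_diff_distrib sum_distrib_left[symmetric]
        sum_distrib_right[symmetric])
  also have "\<dots> = real W * entropy a n W + 2 * real W"
    using False by (simp add: length_mult_entropy)
  finally show ?thesis .
qed

end
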